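(* Let $\lambda_1<\dots<\lambda_N$ be real and $u\in\mathbb{R}^N$ with $u_1^2,\dots,u_N^2\in(0,1)$ and $\sum_{i=1}^Nu_i^2=1$, and set $s_{\lambda,u}(l)=\sum_{i=1}^N\frac{u_i^2}{l-\lambda_i}$ for $l>\lambda_N$. Then $$\sup_{\alpha\in[-1,1]}\left|\sup_{\sigma\in\mathbb{R}^N:\,|\sigma|=1,\,\sigma\cdot u=\alpha}\sum_{i=1}^N\lambda_i\sigma_i^2-\inf_{l>\lambda_N}\left\{l-\frac{\alpha^2}{s_{\lambda,u}(l)}\right\}\right|\le2(\lambda_N-\lambda_1)\frac{u_N^2}{\sqrt{1-u_N^2}}.$$ *)

theory Defs
  imports Complex_Main
begin

text \<open>Vectors in R^N are functions nat => real, with components indexed by 1..N.\<close>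

definition s_fun :: "nat \<Rightarrow> (nat \<Rightarrow> real) \<Rightarrow> (nat \<Rightarrow> real) \<Rightarrow> real \<Rightarrow> real" where
  "s_fun N lam u l = (\<Sum>i=1..N. (u i)^2 / (l - lam i))"

end

theory Submission
  imports Defs
begin

(* The Sup over \<sigma> maximises the quadratic form \<Sum>\<lambda>\<^sub>i\<sigma>\<^sub>i\<^sup>2 on the unit sphere cut by the
   hyperplane \<sigma>\<cdot>u = \<alpha>, and the Inf over l is its Lagrangian dual; completing the square
   gives weak duality Sup \<le> Inf.  For the converse fix \<alpha> and put D = \<lambda>\<^sub>N - \<lambda>\<^sub>1, p = u\<^sub>N\<^sup>2.
   If p < \<alpha>\<^sup>2 < 1, the function \<alpha>\<^sup>2 \<Sum>u\<^sub>i\<^sup>2/(l - \<lambda>\<^sub>i)\<^sup>2 - s(l)\<^sup>2 is nonnegative just above \<lambda>\<^sub>N and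
   nonpositive far out, so it vanishes at some l, where \<sigma>\<^sub>i = \<alpha>u\<^sub>i/((l - \<lambda>\<^sub>i)s(l)) is feasible
   and attains the dual value: there is no gap.  If \<alpha>\<^sup>2 \<le> p, a feasible perturbation of the
   top eigenvector has value at least \<lambda>\<^sub>N - Dp, while each l > \<lambda>\<^sub>N gives a dual value at
   most l.  If \<alpha>\<^sup>2 = 1, take \<sigma> = \<alpha>u; at l = \<lambda>\<^sub>N + y the gap is the difference of the
   arithmetic and harmonic means of the numbers l - \<lambda>\<^sub>i, which is at most D\<^sup>2/y. *)

(* s_fun2 = -(d/dl) s_fun, so \<alpha>\<^sup>2 s_fun2 = s_fun\<^sup>2 says that l is a critical point of the
   dual objective l - \<alpha>\<^sup>2/s_fun l. *)
definition s_fun2 :: "nat \<Rightarrow> (nat \<Rightarrow> real) \<Rightarrow> (nat \<Rightarrow> real) \<Rightarrow> real \<Rightarrow> real" where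
  "s_fun2 N lam u l = (\<Sum>i=1..N. (u i)^2 / (l - lam i)^2)"

definition primal_values :: "nat \<Rightarrow> (nat \<Rightarrow> real) \<Rightarrow> (nat \<Rightarrow> real) \<Rightarrow> real \<Rightarrow> real set" where
  "primal_values N lam u \<alpha> = {(\<Sum>i=1..N. lam i * (\<sigma> i)^2) | \<sigma>.
     (\<Sum>i=1..N. (\<sigma> i)^2) = 1 \<and> (\<Sum>i=1..N. \<sigma> i * u i) = \<alpha>}"

definition dual_values :: "nat \<Rightarrow> (nat \<Rightarrow> real) \<Rightarrow> (nat \<Rightarrow> real) \<Rightarrow> real \<Rightarrow> real set" where
  "dual_values N lam u \<alpha> = {l - \<alpha>^2 / s_fun N lam u l | l. l > lam N}"

lemma primal_valuesI:
  assumes "(\<Sum>i=1..N. (\<sigma> i)^2) = 1" "(\<Sum>i=1..N. \<sigma> i * u i) = \<alpha>"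
  shows "(\<Sum>i=1..N. lam i * (\<sigma> i)^2) \<in> primal_values N lam u \<alpha>"
  using assms unfolding primal_values_def by blast

lemma dual_valuesI: "lam N < l \<Longrightarrow> l - \<alpha>^2 / s_fun N lam u l \<in> dual_values N lam u \<alpha>"
  unfolding dual_values_def by blast

lemma s_fun_pos:
  assumes "\<forall>i\<in>{1..N}. lam i < l" "k \<in> {1..N}" "u k \<noteq> 0"
  shows "0 < s_fun N lam u l"
proof -
  have "0 < (u k)^2 / (l - lam k)" using assms by simp
  also have "\<dots> \<le> s_fun N lam u l" unfolding s_fun_def
    by (rule member_le_sum) (use assms in \<open>auto intro!: divide_nonneg_pos\<close>)
  finally show ?thesis .
qed

lemma quad_form_le_max:
  fixes lam :: "nat \<Rightarrow> real"
  assumes "\<forall>i\<in>{1..N}. lam i \<le> c" "(\<Sum>i=1..N. (\<sigma> i)^2) = 1"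
  shows "(\<Sum>i=1..N. lam i * (\<sigma> i)^2) \<le> c"
proof -
  have "(\<Sum>i=1..N. lam i * (\<sigma> i)^2) \<le> (\<Sum>i=1..N. c * (\<sigma> i)^2)"
    using assms by (intro sum_mono mult_right_mono) auto
  also have "\<dots> = c" using assms(2) by (simp flip: sum_distrib_left)
  finally show ?thesis .
qed

lemma mult_square_diff_divide:
  "(c::real) \<noteq> 0 \<Longrightarrow> c * (x - y / c)^2 = c * x^2 - 2 * x * y + y^2 / c"
  by (simp add: field_simps power2_eq_square)

lemma weak_duality:
  assumes lt: "\<forall>i\<in>{1..N}. lam i < l" and s_pos: "0 < s_fun N lam u l"
    and norm: "(\<Sum>i=1..N. (\<sigma> i)^2) = 1" and dot: "(\<Sum>i=1..N. \<sigma> i * u i) = \<alpha>"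
  shows "(\<Sum>i=1..N. lam i * (\<sigma> i)^2) \<le> l - \<alpha>^2 / s_fun N lam u l"
proof -
  define s where "s = s_fun N lam u l"
  define t where "t = \<alpha> / s"
  define A where "A = (\<Sum>i=1..N. (l - lam i) * (\<sigma> i)^2)"
  have nz: "l - lam i \<noteq> 0" if "i \<in> {1..N}" for i using lt that by fastforce
  have "0 \<le> (\<Sum>i=1..N. (l - lam i) * (\<sigma> i - t * u i / (l - lam i))^2)"
    using lt by (intro sum_nonneg) (simp add: less_imp_le)
  also have "\<dots> = (\<Sum>i=1..N. (l - lam i) * (\<sigma> i)^2 - 2 * t * (\<sigma> i * u i) + t^2 * ((u i)^2 / (l - lam i)))"
  proof (rule sum.cong)
    fix i assume "i \<in> {1..N}"
    from mult_square_diff_divide[OF nz[OF this], of "\<sigma> i" "t * u i"]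
    show "(l - lam i) * (\<sigma> i - t * u i / (l - lam i))^2 =
        (l - lam i) * (\<sigma> i)^2 - 2 * t * (\<sigma> i * u i) + t^2 * ((u i)^2 / (l - lam i))"
      by (simp add: power_mult_distrib algebra_simps)
  qed simp
  also have "\<dots> = A - 2 * t * \<alpha> + t^2 * s"
    by (simp add: sum.distrib sum_subtractf sum_distrib_left A_def dot[symmetric] s_def s_fun_def)
  finally have "\<alpha>^2 / s \<le> A"
    using s_pos by (simp add: s_def t_def field_simps power2_eq_square)
  moreover have "(\<Sum>i=1..N. lam i * (\<sigma> i)^2) = l - A"
    using norm by (simp add: A_def algebra_simps sum_subtractf flip: sum_distrib_left)
  ultimately show ?thesis by (simp add: s_def)
qed

lemma mult_square_divide_mult:
  "(d::real) \<noteq> 0 \<Longrightarrow> c \<noteq> 0 \<Longrightarrow> d * (a * b / (d * c))^2 = a^2 / c^2 * (b^2 / d)"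
  by (simp add: field_simps power2_eq_square)

(* The witness \<sigma> maximises the Lagrangian \<Sum>(\<lambda>\<^sub>i - l)\<sigma>\<^sub>i\<^sup>2 + 2(\<alpha>/s)\<sigma>\<cdot>u; stationarity of l makes
   it a unit vector. *)
lemma stationary_point_attains_dual:
  assumes lt: "\<forall>i\<in>{1..N}. lam i < l" and s_pos: "0 < s_fun N lam u l"
    and stat: "\<alpha>^2 * s_fun2 N lam u l = (s_fun N lam u l)^2"
  shows "l - \<alpha>^2 / s_fun N lam u l \<in> primal_values N lam u \<alpha>"
proof -
  define s where "s = s_fun N lam u l"
  define \<sigma> where "\<sigma> i = \<alpha> * u i / ((l - lam i) * s)" for i
  have nz: "l - lam i \<noteq> 0" if "i \<in> {1..N}" for i using lt that by fastforce
  have "(\<Sum>i=1..N. (\<sigma> i)^2) = \<alpha>^2 / s^2 * s_fun2 N lam u l"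
    by (simp add: \<sigma>_def s_fun2_def sum_distrib_left power_mult_distrib power_divide mult.commute)
  also have "\<dots> = 1" using stat s_pos by (simp add: s_def)
  finally have norm: "(\<Sum>i=1..N. (\<sigma> i)^2) = 1" .
  have "(\<Sum>i=1..N. \<sigma> i * u i) = \<alpha> / s * (\<Sum>i=1..N. (u i)^2 / (l - lam i))"
    by (simp add: \<sigma>_def sum_distrib_left power2_eq_square mult_ac)
  also have "\<dots> = \<alpha>" using s_pos by (simp add: s_def s_fun_def)
  finally have dot: "(\<Sum>i=1..N. \<sigma> i * u i) = \<alpha>" .
  have "(\<Sum>i=1..N. lam i * (\<sigma> i)^2)
      = (\<Sum>i=1..N. l * (\<sigma> i)^2 - \<alpha>^2 / s^2 * ((u i)^2 / (l - lam i)))"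
  proof (rule sum.cong)
    fix i assume "i \<in> {1..N}"
    then have "(l - lam i) * (\<sigma> i)^2 = \<alpha>^2 / s^2 * ((u i)^2 / (l - lam i))"
      using mult_square_divide_mult[OF nz, of i s] s_pos by (simp add: \<sigma>_def s_def)
    then show "lam i * (\<sigma> i)^2 = l * (\<sigma> i)^2 - \<alpha>^2 / s^2 * ((u i)^2 / (l - lam i))"
      by (simp add: algebra_simps)
  qed simp
  also have "\<dots> = l * (\<Sum>i=1..N. (\<sigma> i)^2) - \<alpha>^2 / s^2 * s"
    by (simp only: sum_subtractf sum_distrib_left s_def s_fun_def)
  also have "\<dots> = l - \<alpha>^2 / s"
    using norm s_pos by (simp add: power2_eq_square)
  finally show ?thesis using primal_valuesI[OF norm dot, of lam] by (simp add: s_def)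
qed

lemma Sup_Inf_gap_le:
  fixes P Q :: "real set"
  assumes v: "v \<in> P" and bdd: "bdd_above P" and below: "\<And>x y. x \<in> P \<Longrightarrow> y \<in> Q \<Longrightarrow> x \<le> y"
    and near: "\<And>c. v + B < c \<Longrightarrow> \<exists>y\<in>Q. y \<le> c"
  shows "\<bar>Sup P - Inf Q\<bar> \<le> B"
proof -
  have "Q \<noteq> {}" using near[of "v + B + 1"] by auto
  have "bdd_below Q" using v below by (auto simp: bdd_below_def)
  have "Sup P \<le> Inf Q"
    using v \<open>Q \<noteq> {}\<close> below by (intro cSup_least cInf_greatest) auto
  moreover have "v \<le> Sup P" using v bdd by (rule cSup_upper)
  moreover have "Inf Q \<le> v + B"
  proof (rule dense_ge)
    fix c assume "v + B < c"
    then obtain y where "y \<in> Q" "y \<le> c" using near by blast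
    then show "Inf Q \<le> c" using cInf_lower[OF _ \<open>bdd_below Q\<close>] by force
  qed
  ultimately show ?thesis by linarith
qed

lemma diff_inverse_le:
  fixes A s :: real
  assumes "0 < A" "0 \<le> A^2 * s - A"
  shows "A - 1 / s \<le> A^2 * s - A"
proof -
  have "1 \<le> A * s" using assms by (simp add: power2_eq_square algebra_simps)
  then have "0 < s" using zero_less_mult_pos[of A s] \<open>0 < A\<close> by linarith
  have "A - 1 / s = (A^2 * s - A) / (A * s)"
    using \<open>0 < A\<close> \<open>0 < s\<close> by (simp add: field_simps power2_eq_square)
  also have "\<dots> \<le> A^2 * s - A"
    using mult_left_mono[OF \<open>1 \<le> A * s\<close> assms(2)] \<open>0 < A\<close> \<open>0 < s\<close> by (simp add: divide_le_eq)
  finally show ?thesis .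
qed

lemma mean_minus_harmonic_mean_le:
  fixes w x :: "'a \<Rightarrow> real"
  assumes w_nonneg: "\<forall>i\<in>I. 0 \<le> w i" and w_sum: "sum w I = 1"
    and "0 < y" and x: "\<forall>i\<in>I. y \<le> x i \<and> x i \<le> y + D"
  shows "(\<Sum>i\<in>I. w i * x i) - 1 / (\<Sum>i\<in>I. w i / x i) \<le> D^2 / y"
proof -
  define A where "A = (\<Sum>i\<in>I. w i * x i)"
  define s where "s = (\<Sum>i\<in>I. w i / x i)"
  have "(\<Sum>i\<in>I. w i * y) \<le> A" "A \<le> (\<Sum>i\<in>I. w i * (y + D))"
    unfolding A_def using w_nonneg x by (auto intro!: sum_mono mult_left_mono)
  then have A_bounds: "y \<le> A" "A \<le> y + D" using w_sum by (simp_all flip: sum_distrib_right)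
  have x_pos: "0 < x i" if "i \<in> I" for i using x that \<open>0 < y\<close> by force
  have "(\<Sum>i\<in>I. w i * (x i - A)^2 / x i) = (\<Sum>i\<in>I. w i * x i - 2 * A * w i + A^2 * (w i / x i))"
  proof (rule sum.cong)
    fix i assume "i \<in> I"
    then have "x i \<noteq> 0" using x_pos by force
    then show "w i * (x i - A)^2 / x i = w i * x i - 2 * A * w i + A^2 * (w i / x i)"
      by (simp add: field_simps power2_eq_square)
  qed simp
  also have "\<dots> = A^2 * s - A"
    using w_sum
    by (simp add: sum.distrib sum_subtractf power2_eq_square del: times_divide_eq_right
        flip: sum_distrib_left A_def s_def)
  finally have deviation: "(\<Sum>i\<in>I. w i * (x i - A)^2 / x i) = A^2 * s - A" .
  have dev_nonneg: "0 \<le> A^2 * s - A"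
    unfolding deviation[symmetric] using w_nonneg x_pos by (auto intro!: sum_nonneg divide_nonneg_pos)
  have dev_le: "A^2 * s - A \<le> D^2 / y"
  proof -
    have "w i * (x i - A)^2 / x i \<le> w i * (D^2 / y)" if "i \<in> I" for i
    proof -
      have "\<bar>x i - A\<bar> \<le> D" using x that A_bounds by force
      then have "(x i - A)^2 \<le> D^2" by (metis abs_le_square_iff abs_of_nonneg abs_ge_zero order_trans)
      then have "(x i - A)^2 / x i \<le> D^2 / y" using x that \<open>0 < y\<close> by (intro frac_le) auto
      then show ?thesis using mult_left_mono[OF _ bspec[OF w_nonneg that]] by fastforce
    qed
    then have "A^2 * s - A \<le> (\<Sum>i\<in>I. w i * (D^2 / y))" unfolding deviation[symmetric] by (rule sum_mono)
    also have "\<dots> = D^2 / y" using w_sum by (simp only: sum_distrib_right[symmetric] mult_1)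
    finally show ?thesis .
  qed
  have "0 < A" using A_bounds \<open>0 < y\<close> by linarith
  then show ?thesis
    using diff_inverse_le[OF _ dev_nonneg] dev_le unfolding A_def[symmetric] s_def[symmetric] by fastforce
qed

locale secular_data =
  fixes N :: nat and lam u :: "nat \<Rightarrow> real"
  assumes lam_strict_mono: "\<And>i j. 1 \<le> i \<Longrightarrow> i < j \<Longrightarrow> j \<le> N \<Longrightarrow> lam i < lam j"
    and u_sq_bounds: "\<And>i. 1 \<le> i \<Longrightarrow> i \<le> N \<Longrightarrow> 0 < (u i)^2 \<and> (u i)^2 < 1"
    and u_norm: "(\<Sum>i=1..N. (u i)^2) = 1"
begin

abbreviation gap_bound :: real where
  "gap_bound \<equiv> 2 * (lam N - lam 1) * ((u N)^2 / sqrt (1 - (u N)^2))"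

lemma N_ge_2: "2 \<le> N"
proof (rule ccontr)
  assume "\<not> 2 \<le> N"
  then have "N = 0 \<or> N = 1" by auto
  then show False using u_norm u_sq_bounds[of 1] by auto
qed

lemma uN_sq_pos: "0 < (u N)^2" and uN_sq_less_1: "(u N)^2 < 1"
  using u_sq_bounds[of N] N_ge_2 by auto

lemma lam_le_last: "i \<in> {1..N} \<Longrightarrow> lam i \<le> lam N"
  using lam_strict_mono[of i N] by (cases "i = N") auto

lemma lam_ge_first: "i \<in> {1..N} \<Longrightarrow> lam 1 \<le> lam i"
  using lam_strict_mono[of 1 i] by (cases "i = 1") auto

lemma lam_le_second_last:
  assumes "i \<in> {1..N}" "i \<noteq> N"
  shows "lam i \<le> lam (N - 1)"
proof -
  have "i = N - 1 \<or> i < N - 1" using assms by auto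
  then show ?thesis using lam_strict_mono[of i "N - 1"] assms by auto
qed

lemma lam_first_less_last: "lam 1 < lam N"
  using lam_strict_mono[of 1 N] N_ge_2 by simp

lemma lam_less_if_last_less: "lam N < l \<Longrightarrow> \<forall>i\<in>{1..N}. lam i < l"
  using lam_le_last by force

lemma s_fun_pos_if_last_less: "lam N < l \<Longrightarrow> 0 < s_fun N lam u l"
  using s_fun_pos[OF lam_less_if_last_less, of l N] N_ge_2 uN_sq_pos by simp

lemma gap_bound_pos: "0 < gap_bound"
  using lam_first_less_last uN_sq_pos uN_sq_less_1 by simp

lemma gap_bound_ge: "(lam N - lam 1) * (u N)^2 \<le> gap_bound"
proof -
  have "0 < sqrt (1 - (u N)^2)" "sqrt (1 - (u N)^2) \<le> 1" using uN_sq_less_1 by auto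
  then have "(u N)^2 \<le> (u N)^2 / sqrt (1 - (u N)^2)" using uN_sq_pos by (simp add: le_divide_eq)
  then have "(lam N - lam 1) * (u N)^2 \<le> (lam N - lam 1) * ((u N)^2 / sqrt (1 - (u N)^2))"
    using lam_first_less_last by (intro mult_left_mono) auto
  moreover have "0 \<le> (lam N - lam 1) * ((u N)^2 / sqrt (1 - (u N)^2))"
    using lam_first_less_last uN_sq_less_1 by simp
  ultimately show ?thesis by linarith
qed

lemma primal_values_bdd_above: "bdd_above (primal_values N lam u \<alpha>)"
proof -
  have "\<forall>i\<in>{1..N}. lam i \<le> lam N" using lam_le_last by blast
  then show ?thesis unfolding primal_values_def bdd_above_def using quad_form_le_max by blast
qed

lemma primal_le_dual:
  "x \<in> primal_values N lam u \<alpha> \<Longrightarrow> y \<in> dual_values N lam u \<alpha> \<Longrightarrow> x \<le> y"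
  unfolding primal_values_def dual_values_def
  using weak_duality[OF lam_less_if_last_less s_fun_pos_if_last_less] by auto

lemma weighted_gap_to_last_ge:
  "- (lam N - lam 1) * (1 - (u N)^2) \<le> (\<Sum>i=1..N. (u i)^2 * (lam i - lam N))"
proof -
  let ?D = "lam N - lam 1"
  have "(\<Sum>i=1..N. - ?D * (u i)^2 + (if i = N then ?D * (u N)^2 else 0))
      \<le> (\<Sum>i=1..N. (u i)^2 * (lam i - lam N))"
  proof (rule sum_mono)
    fix i assume i: "i \<in> {1..N}"
    show "- ?D * (u i)^2 + (if i = N then ?D * (u N)^2 else 0) \<le> (u i)^2 * (lam i - lam N)"
    proof (cases "i = N")
      case False
      have "(u i)^2 * (- ?D) \<le> (u i)^2 * (lam i - lam N)"
        using lam_ge_first[OF i] by (intro mult_left_mono) auto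
      then show ?thesis using False by (simp add: algebra_simps)
    qed (simp add: algebra_simps)
  qed
  also have "(\<Sum>i=1..N. - ?D * (u i)^2 + (if i = N then ?D * (u N)^2 else 0))
      = - ?D * (\<Sum>i=1..N. (u i)^2) + ?D * (u N)^2"
    using N_ge_2 by (simp add: sum.distrib sum_distrib_left)
  finally show ?thesis using u_norm by (simp add: algebra_simps)
qed

lemma top_perturbation:
  assumes a: "(\<alpha> - a)^2 = (u N)^2 * (1 - \<alpha>^2) / (1 - (u N)^2)"
  defines "\<sigma> \<equiv> \<lambda>i. a * u i + (if i = N then (\<alpha> - a) / u N else 0)"
  shows "(\<Sum>i=1..N. (\<sigma> i)^2) = 1" and "(\<Sum>i=1..N. \<sigma> i * u i) = \<alpha>"
    and "(\<Sum>i=1..N. lam i * (\<sigma> i)^2) = lam N + a^2 * (\<Sum>i=1..N. (u i)^2 * (lam i - lam N))"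
proof -
  define b where "b = (\<alpha> - a) / u N"
  have N: "N \<in> {1..N}" using N_ge_2 by simp
  have bu: "b * u N = \<alpha> - a" using uN_sq_pos by (simp add: b_def)
  have b_sq: "b^2 = (1 - \<alpha>^2) / (1 - (u N)^2)"
    using a uN_sq_pos by (simp add: b_def power_divide)
  have "(\<Sum>i=1..N. \<sigma> i * u i) = (\<Sum>i=1..N. a * (u i)^2 + (if i = N then b * u N else 0))"
    by (rule sum.cong) (auto simp: \<sigma>_def b_def algebra_simps power2_eq_square)
  also have "\<dots> = \<alpha>"
    using N u_norm bu by (simp add: sum.distrib flip: sum_distrib_left)
  finally show "(\<Sum>i=1..N. \<sigma> i * u i) = \<alpha>" .
  have "(\<Sum>i=1..N. (\<sigma> i)^2)
      = (\<Sum>i=1..N. a^2 * (u i)^2 + (if i = N then 2 * a * (b * u N) + b^2 else 0))"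
    by (rule sum.cong) (auto simp: \<sigma>_def b_def algebra_simps power2_eq_square)
  also have "\<dots> = a^2 + 2 * a * (\<alpha> - a) + (1 - \<alpha>^2) / (1 - (u N)^2)"
    using N u_norm bu b_sq by (simp add: sum.distrib flip: sum_distrib_left)
  also have "\<dots> = \<alpha>^2 - (\<alpha> - a)^2 + (1 - \<alpha>^2) / (1 - (u N)^2)"
    by (simp add: power2_eq_square algebra_simps)
  also have "\<dots> = 1"
    using a uN_sq_less_1 by (simp add: field_simps)
  finally show norm: "(\<Sum>i=1..N. (\<sigma> i)^2) = 1" .
  have "(\<Sum>i=1..N. lam i * (\<sigma> i)^2)
      = (\<Sum>i=1..N. a^2 * ((u i)^2 * (lam i - lam N)) + lam N * (\<sigma> i)^2)"
    by (rule sum.cong) (auto simp: \<sigma>_def algebra_simps power2_eq_square)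
  then show "(\<Sum>i=1..N. lam i * (\<sigma> i)^2) = lam N + a^2 * (\<Sum>i=1..N. (u i)^2 * (lam i - lam N))"
    using norm by (simp add: sum.distrib flip: sum_distrib_left)
qed

lemma primal_value_near_top:
  assumes "\<alpha>^2 \<le> (u N)^2"
  shows "\<exists>v\<in>primal_values N lam u \<alpha>. lam N - (lam N - lam 1) * (u N)^2 \<le> v"
proof -
  define p where "p = (u N)^2"
  define D where "D = lam N - lam 1"
  have p: "0 < p" "p < 1" "\<alpha>^2 \<le> p" using uN_sq_pos uN_sq_less_1 assms by (simp_all add: p_def)
  have D: "0 < D" using lam_first_less_last by (simp add: D_def)
  define r where "r = sqrt (p * (1 - \<alpha>^2) / (1 - p))"
  have "0 \<le> 1 - \<alpha>^2" "0 < 1 - p" using p by linarith+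
  then have r_sq_nonneg: "0 \<le> p * (1 - \<alpha>^2) / (1 - p)" using p by simp
  then have r_sq: "r^2 = p * (1 - \<alpha>^2) / (1 - p)" unfolding r_def by (rule real_sqrt_pow2)
  have "\<alpha>^2 * (1 - p) \<le> p * (1 - \<alpha>^2)" using p by (simp add: algebra_simps)
  then have "\<alpha>^2 \<le> r^2" using p r_sq by (simp add: le_divide_eq)
  moreover have "0 \<le> r" using r_sq_nonneg by (simp add: r_def)
  ultimately have "\<bar>\<alpha>\<bar> \<le> r" by (simp add: power2_le_iff_abs_le)
  define a where "a = (if 0 \<le> \<alpha> then \<alpha> - r else \<alpha> + r)"
  have "\<bar>a\<bar> \<le> r" using \<open>\<bar>\<alpha>\<bar> \<le> r\<close> by (auto simp: a_def)
  then have a_sq: "a^2 \<le> r^2" using \<open>0 \<le> r\<close> by (simp add: power2_le_iff_abs_le)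
  have a_diff: "(\<alpha> - a)^2 = r^2" by (simp add: a_def)
  note \<sigma> = top_perturbation[of \<alpha> a, folded p_def, OF a_diff[unfolded r_sq]]
  have "a^2 * (D * (1 - p)) \<le> r^2 * (D * (1 - p))"
    using a_sq p D by (intro mult_right_mono) auto
  also have "\<dots> = D * p * (1 - \<alpha>^2)" using p by (simp add: r_sq field_simps)
  also have "\<dots> \<le> D * p" using p D by (simp add: mult_left_le)
  finally have "lam N - D * p \<le> lam N + a^2 * (\<Sum>i=1..N. (u i)^2 * (lam i - lam N))"
    using mult_left_mono[OF weighted_gap_to_last_ge, of "a^2"] by (simp add: D_def p_def algebra_simps)
  moreover have "lam N + a^2 * (\<Sum>i=1..N. (u i)^2 * (lam i - lam N)) \<in> primal_values N lam u \<alpha>"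
    using primal_valuesI[OF \<sigma>(1,2), of lam] \<sigma>(3) by simp
  ultimately show ?thesis unfolding D_def p_def by blast
qed

lemma dual_values_below:
  assumes "lam N < c"
  shows "\<exists>y\<in>dual_values N lam u \<alpha>. y \<le> c"
proof
  show "c - \<alpha>^2 / s_fun N lam u c \<in> dual_values N lam u \<alpha>" using assms by (rule dual_valuesI)
  show "c - \<alpha>^2 / s_fun N lam u c \<le> c" using s_fun_pos_if_last_less[OF assms] by simp
qed

lemma stationarity_continuous:
  "continuous_on {lam N<..} (\<lambda>l. \<alpha>^2 * s_fun2 N lam u l - (s_fun N lam u l)^2)"
proof -
  have "\<forall>l\<in>{lam N<..}. \<forall>i\<in>{1..N}. l - lam i \<noteq> 0" using lam_less_if_last_less by fastforce
  then show ?thesis unfolding s_fun_def s_fun2_def by (intro continuous_intros) auto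
qed

lemma stationarity_nonneg_near_top:
  assumes "(u N)^2 < \<alpha>^2"
  shows "\<exists>l>lam N. (s_fun N lam u l)^2 \<le> \<alpha>^2 * s_fun2 N lam u l"
proof -
  define p where "p = (u N)^2"
  define g where "g = lam N - lam (N - 1)"
  \<comment> \<open>chosen so that \<open>p / \<epsilon> + 1 / g = \<bar>\<alpha>\<bar> * \<bar>u N\<bar> / \<epsilon>\<close>\<close>
  define \<epsilon> where "\<epsilon> = g * (\<bar>\<alpha>\<bar> * \<bar>u N\<bar> - p)"
  define l where "l = lam N + \<epsilon>"
  have N: "N \<in> {1..N}" using N_ge_2 by simp
  have "\<bar>u N\<bar> < \<bar>\<alpha>\<bar>" using abs_le_square_iff[of \<alpha> "u N"] assms by auto
  moreover have "p = \<bar>u N\<bar> * \<bar>u N\<bar>" by (simp add: p_def power2_eq_square)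
  ultimately have "p < \<bar>\<alpha>\<bar> * \<bar>u N\<bar>"
    using uN_sq_pos mult_strict_right_mono[of "\<bar>u N\<bar>" "\<bar>\<alpha>\<bar>" "\<bar>u N\<bar>"] by auto
  moreover have "0 < g" using lam_strict_mono[of "N - 1" N] N_ge_2 by (simp add: g_def)
  ultimately have "0 < \<epsilon>" by (simp add: \<epsilon>_def)
  have "s_fun N lam u l \<le> (\<Sum>i=1..N. (if i = N then p / \<epsilon> else 0) + (u i)^2 / g)"
    unfolding s_fun_def
  proof (rule sum_mono)
    fix i assume i: "i \<in> {1..N}"
    show "(u i)^2 / (l - lam i) \<le> (if i = N then p / \<epsilon> else 0) + (u i)^2 / g"
    proof (cases "i = N")
      case False
      have "g \<le> l - lam i" using lam_le_second_last[OF i False] \<open>0 < \<epsilon>\<close> by (simp add: g_def l_def)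
      then show ?thesis using False \<open>0 < g\<close> by (simp add: divide_left_mono)
    qed (use \<open>0 < g\<close> in \<open>simp add: l_def p_def\<close>)
  qed
  also have "\<dots> = p / \<epsilon> + 1 / g" using N u_norm by (simp add: sum.distrib flip: sum_divide_distrib)
  also have "\<dots> = \<bar>\<alpha>\<bar> * \<bar>u N\<bar> / \<epsilon>" using \<open>0 < \<epsilon>\<close> \<open>0 < g\<close> by (simp add: \<epsilon>_def field_simps)
  finally have "(s_fun N lam u l)^2 \<le> (\<bar>\<alpha>\<bar> * \<bar>u N\<bar> / \<epsilon>)^2"
    using s_fun_pos_if_last_less[of l] \<open>0 < \<epsilon>\<close> by (intro power_mono) (auto simp: l_def)
  also have "\<dots> = \<alpha>^2 * ((u N)^2 / (l - lam N)^2)" by (simp add: l_def power_mult_distrib power_divide)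
  also have "\<dots> \<le> \<alpha>^2 * s_fun2 N lam u l"
    unfolding s_fun2_def using N by (intro mult_left_mono member_le_sum) auto
  finally have "(s_fun N lam u l)^2 \<le> \<alpha>^2 * s_fun2 N lam u l" .
  moreover have "lam N < l" using \<open>0 < \<epsilon>\<close> by (simp add: l_def)
  ultimately show ?thesis by blast
qed

lemma stationarity_nonpos_far:
  assumes "0 < \<bar>\<alpha>\<bar>" "\<bar>\<alpha>\<bar> < 1"
  shows "\<exists>l>lam N. \<alpha>^2 * s_fun2 N lam u l \<le> (s_fun N lam u l)^2"
proof -
  define D where "D = lam N - lam 1"
  \<comment> \<open>chosen so that \<open>\<bar>\<alpha>\<bar> / y = 1 / (y + D)\<close>\<close>
  define y where "y = \<bar>\<alpha>\<bar> * D / (1 - \<bar>\<alpha>\<bar>)"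
  define l where "l = lam N + y"
  have "0 < D" using lam_first_less_last by (simp add: D_def)
  then have "0 < y" using assms by (simp add: y_def)
  have dist: "y \<le> l - lam i \<and> l - lam i \<le> y + D" if "i \<in> {1..N}" for i
    using lam_ge_first[OF that] lam_le_last[OF that] by (simp add: l_def D_def)
  have "s_fun2 N lam u l \<le> (\<Sum>i=1..N. (u i)^2 / y^2)"
    unfolding s_fun2_def using dist \<open>0 < y\<close> by (intro sum_mono divide_left_mono power_mono) force+
  also have "\<dots> = 1 / y^2" using u_norm by (simp flip: sum_divide_distrib)
  finally have "\<alpha>^2 * s_fun2 N lam u l \<le> \<alpha>^2 * (1 / y^2)" by (rule mult_left_mono) simp
  also have "\<dots> = (\<bar>\<alpha>\<bar> / y)^2" by (simp add: power_divide)
  also have "\<bar>\<alpha>\<bar> / y = 1 / (y + D)" using assms \<open>0 < D\<close> by (simp add: y_def field_simps)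
  also have "(1 / (y + D))^2 \<le> (s_fun N lam u l)^2"
  proof (rule power_mono)
    have "(\<Sum>i=1..N. (u i)^2 / (y + D)) \<le> s_fun N lam u l"
      unfolding s_fun_def using dist \<open>0 < y\<close> by (intro sum_mono divide_left_mono) force+
    then show "1 / (y + D) \<le> s_fun N lam u l" using u_norm by (simp flip: sum_divide_distrib)
  qed (use \<open>0 < y\<close> \<open>0 < D\<close> in simp)
  finally have "\<alpha>^2 * s_fun2 N lam u l \<le> (s_fun N lam u l)^2" .
  moreover have "lam N < l" using \<open>0 < y\<close> by (simp add: l_def)
  ultimately show ?thesis by blast
qed

lemma exists_stationary_point:
  assumes "(u N)^2 < \<alpha>^2" "\<alpha>^2 < 1"
  shows "\<exists>l>lam N. \<alpha>^2 * s_fun2 N lam u l = (s_fun N lam u l)^2"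
proof -
  define f where "f l = \<alpha>^2 * s_fun2 N lam u l - (s_fun N lam u l)^2" for l
  have "0 < \<bar>\<alpha>\<bar>" using assms uN_sq_pos by auto
  moreover have "\<bar>\<alpha>\<bar> < 1" using assms(2) by (simp add: abs_square_less_1)
  ultimately obtain l2 where "lam N < l2" "f l2 \<le> 0"
    using stationarity_nonpos_far by (force simp: f_def)
  obtain l1 where "lam N < l1" "0 \<le> f l1"
    using stationarity_nonneg_near_top[OF assms(1)] by (force simp: f_def)
  have "connected (f ` {lam N<..})"
    using stationarity_continuous by (intro connected_continuous_image) (simp_all add: f_def)
  then have "{f l2..f l1} \<subseteq> f ` {lam N<..}"
    using \<open>lam N < l1\<close> \<open>lam N < l2\<close> by (intro connected_contains_Icc) auto
  then have "0 \<in> f ` {lam N<..}" using \<open>f l2 \<le> 0\<close> \<open>0 \<le> f l1\<close> by auto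
  then show ?thesis by (auto simp: f_def)
qed

lemma strong_duality:
  assumes "(u N)^2 < \<alpha>^2" "\<alpha>^2 < 1"
  shows "\<exists>v\<in>primal_values N lam u \<alpha>. v \<in> dual_values N lam u \<alpha>"
proof -
  obtain l where "lam N < l" and "\<alpha>^2 * s_fun2 N lam u l = (s_fun N lam u l)^2"
    using exists_stationary_point[OF assms] by blast
  then show ?thesis
    using stationary_point_attains_dual[OF lam_less_if_last_less s_fun_pos_if_last_less]
      dual_valuesI by blast
qed

lemma dual_gap_at_unit_alpha:
  assumes "\<alpha>^2 = 1"
  shows "\<exists>v\<in>primal_values N lam u \<alpha>. \<exists>y\<in>dual_values N lam u \<alpha>. y \<le> v + gap_bound"
proof -
  define D where "D = lam N - lam 1"
  define y where "y = D^2 / gap_bound"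
  define l where "l = lam N + y"
  define M where "M = (\<Sum>i=1..N. lam i * (u i)^2)"
  have "0 < D" using lam_first_less_last by (simp add: D_def)
  then have "0 < y" unfolding y_def using gap_bound_pos by (intro divide_pos_pos) auto
  have "(\<Sum>i=1..N. (u i)^2 * (l - lam i)) - 1 / (\<Sum>i=1..N. (u i)^2 / (l - lam i)) \<le> D^2 / y"
    using u_norm \<open>0 < y\<close> lam_ge_first lam_le_last
    by (intro mean_minus_harmonic_mean_le[where w = "\<lambda>i. (u i)^2" and x = "\<lambda>i. l - lam i"])
      (auto simp: l_def D_def)
  moreover have "(\<Sum>i=1..N. (u i)^2 * (l - lam i)) = l - M"
    using u_norm by (simp add: M_def algebra_simps sum_subtractf flip: sum_distrib_left)
  ultimately have "l - \<alpha>^2 / s_fun N lam u l \<le> M + gap_bound"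
    using assms \<open>0 < D\<close> gap_bound_pos by (simp add: s_fun_def y_def)
  moreover have "l - \<alpha>^2 / s_fun N lam u l \<in> dual_values N lam u \<alpha>"
    using \<open>0 < y\<close> by (intro dual_valuesI) (simp add: l_def)
  moreover have "M \<in> primal_values N lam u \<alpha>"
  proof -
    have "(\<Sum>i=1..N. (\<alpha> * u i)^2) = 1"
      using u_norm assms by (simp add: power_mult_distrib flip: sum_distrib_left)
    moreover have "(\<Sum>i=1..N. \<alpha> * u i * u i) = \<alpha>"
      using u_norm by (simp add: power2_eq_square mult.assoc flip: sum_distrib_left)
    ultimately have "(\<Sum>i=1..N. lam i * (\<alpha> * u i)^2) \<in> primal_values N lam u \<alpha>"
      by (rule primal_valuesI)
    then show ?thesis using assms by (simp add: M_def power_mult_distrib)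
  qed
  ultimately show ?thesis by blast
qed

lemma primal_dual_gap:
  assumes "\<alpha> \<in> {-1..1}"
  shows "\<bar>Sup (primal_values N lam u \<alpha>) - Inf (dual_values N lam u \<alpha>)\<bar> \<le> gap_bound"
proof -
  have "\<alpha>^2 \<le> 1" using assms by (simp add: abs_square_le_1 abs_le_iff)
  then consider "\<alpha>^2 \<le> (u N)^2" | "(u N)^2 < \<alpha>^2" "\<alpha>^2 < 1" | "\<alpha>^2 = 1" by linarith
  then obtain v where v: "v \<in> primal_values N lam u \<alpha>"
    and near: "\<And>c. v + gap_bound < c \<Longrightarrow> \<exists>y\<in>dual_values N lam u \<alpha>. y \<le> c"
  proof cases
    case 1
    then obtain v where v: "v \<in> primal_values N lam u \<alpha>"
      and "lam N - (lam N - lam 1) * (u N)^2 \<le> v"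
      using primal_value_near_top by blast
    then have "lam N < c" if "v + gap_bound < c" for c using that gap_bound_ge by linarith
    with v show ?thesis using dual_values_below that by blast
  next
    case 2
    then obtain v where "v \<in> primal_values N lam u \<alpha>" "v \<in> dual_values N lam u \<alpha>"
      using strong_duality by blast
    moreover have "v \<le> c" if "v + gap_bound < c" for c using that gap_bound_pos by linarith
    ultimately show ?thesis using that by blast
  next
    case 3
    then obtain v y where "v \<in> primal_values N lam u \<alpha>"
      and y: "y \<in> dual_values N lam u \<alpha>" "y \<le> v + gap_bound"
      using dual_gap_at_unit_alpha by blast
    moreover have "y \<le> c" if "v + gap_bound < c" for c using that y(2) by linarith
    ultimately show ?thesis using that by blast
  qed
  show ?thesis by (rule Sup_Inf_gap_le[OF v primal_values_bdd_above primal_le_dual near])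
qed

end

theorem corollary3p5:
  fixes N :: nat and lam u :: "nat \<Rightarrow> real"
  assumes mono: "\<And>i j. 1 \<le> i \<Longrightarrow> i < j \<Longrightarrow> j \<le> N \<Longrightarrow> lam i < lam j"
    and u_pos: "\<And>i. 1 \<le> i \<Longrightarrow> i \<le> N \<Longrightarrow> 0 < (u i)^2 \<and> (u i)^2 < 1"
    and u_norm: "(\<Sum>i=1..N. (u i)^2) = 1"
  shows "(SUP \<alpha>\<in>{-1..1::real}.
            \<bar>Sup {(\<Sum>i=1..N. lam i * (\<sigma> i)^2) | \<sigma>.
                    (\<Sum>i=1..N. (\<sigma> i)^2) = 1 \<and> (\<Sum>i=1..N. \<sigma> i * u i) = \<alpha>}
             - Inf {l - \<alpha>^2 / s_fun N lam u l | l. l > lam N}\<bar>)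
         \<le> 2 * (lam N - lam 1) * ((u N)^2 / sqrt (1 - (u N)^2))"
proof -
  interpret secular_data N lam u
    by unfold_locales (fact mono u_pos u_norm)+
  show ?thesis
    using primal_dual_gap unfolding primal_values_def dual_values_def by (intro cSUP_least) auto
qed

end
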